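(* Let $\boldsymbol{A},\boldsymbol{B}\in\mathsf{ISL}$ and let $\mathbb{X},\mathbb{Y}$ be posets. (i) If $f\colon\boldsymbol{A}\to\boldsymbol{B}$ is a homomorphism, then $f_\ast\colon\boldsymbol{B}_\ast\rightharpoonup\boldsymbol{A}_\ast$ is a partial positive p-morphism. (ii) If $p\colon\mathbb{X}\rightharpoonup\mathbb{Y}$ is a partial positive p-morphism, then $\mathsf{Up}_{\mathsf{ISL}}(p)\colon\mathsf{Up}_{\mathsf{ISL}}(\mathbb{Y})\to\mathsf{Up}_{\mathsf{ISL}}(\mathbb{X})$ is a homomorphism.
   Context: $\mathsf{ISL}$ is the class of implicative semilattices $\langle A;\land,\to,1\rangle$: $\langle A;\land\rangle$ is a semilattice (order $a\le b$ iff $a\land b=a$) with maximum $1$ and $c\land a\le b\iff c\le a\to b$ for all $a,b,c$. A filter is a nonempty upset closed under $\land$; it is meet irreducible if proper and not the intersection of two filters both different from it; $\boldsymbol{A}_\ast$ is the poset of meet irreducible filters under inclusion. A partial function $p\colon X\rightharpoonup Y$ is a function from $\mathsf{dom}(p)\subseteq X$ to $Y$; between posets it is order preserving if $x\le z$ in $\mathsf{dom}(p)$ implies $p(x)\le p(z)$. An order preserving $p\colon\mathbb{X}\rightharpoonup\mathbb{Y}$ is a partial positive p-morphism if whenever $x\in\mathsf{dom}(p)$, $y\in Y$, $p(x)\le y$, there is $z\in\mathsf{dom}(p)$ with $x\le z$ and $y=p(z)$. For a homomorphism $f$, $f_\ast$ has domain $\{F\in\boldsymbol{B}_\ast: f^{-1}[F]\in\boldsymbol{A}_\ast\}$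 and $f_\ast(F)=f^{-1}[F]$. For a poset $\mathbb{X}$, $\mathsf{Up}_{\mathsf{ISL}}(\mathbb{X})=\langle\mathsf{Up}(\mathbb{X});\cap,\to,X\rangle$ with $\mathsf{Up}(\mathbb{X})$ the set of upsets and $U\to V=X\smallsetminus{\downarrow}(U\smallsetminus V)$; and $\mathsf{Up}_{\mathsf{ISL}}(p)(U)=X\smallsetminus{\downarrow}p^{-1}[Y\smallsetminus U]$. *)

theory Defs
  imports Main
begin

definition isl_le :: "('a \<Rightarrow> 'a \<Rightarrow> 'a) \<Rightarrow> 'a \<Rightarrow> 'a \<Rightarrow> bool" where
  "isl_le meet a b \<longleftrightarrow> meet a b = a"

definition is_isl :: "'a set \<Rightarrow> ('a \<Rightarrow> 'a \<Rightarrow> 'a) \<Rightarrow> ('a \<Rightarrow> 'a \<Rightarrow> 'a) \<Rightarrow> 'a \<Rightarrow> bool" where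
  "is_isl A meet imp one \<longleftrightarrow>
     one \<in> A \<and>
     (\<forall>a\<in>A. \<forall>b\<in>A. meet a b \<in> A \<and> imp a b \<in> A) \<and>
     (\<forall>a\<in>A. \<forall>b\<in>A. \<forall>c\<in>A. meet (meet a b) c = meet a (meet b c)) \<and>
     (\<forall>a\<in>A. \<forall>b\<in>A. meet a b = meet b a) \<and>
     (\<forall>a\<in>A. meet a a = a) \<and>
     (\<forall>a\<in>A. isl_le meet a one) \<and>
     (\<forall>a\<in>A. \<forall>b\<in>A. \<forall>c\<in>A. isl_le meet (meet c a) b \<longleftrightarrow> isl_le meet c (imp a b))"

definition isl_hom ::
  "'a set \<Rightarrow> ('a \<Rightarrow> 'a \<Rightarrow> 'a) \<Rightarrow> ('a \<Rightarrow> 'a \<Rightarrow> 'a) \<Rightarrow> 'a \<Rightarrow>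
   'b set \<Rightarrow> ('b \<Rightarrow> 'b \<Rightarrow> 'b) \<Rightarrow> ('b \<Rightarrow> 'b \<Rightarrow> 'b) \<Rightarrow> 'b \<Rightarrow> ('a \<Rightarrow> 'b) \<Rightarrow> bool" where
  "isl_hom A meetA impA oneA B meetB impB oneB f \<longleftrightarrow>
     (\<forall>a\<in>A. f a \<in> B) \<and>
     (\<forall>a\<in>A. \<forall>b\<in>A. f (meetA a b) = meetB (f a) (f b)) \<and>
     (\<forall>a\<in>A. \<forall>b\<in>A. f (impA a b) = impB (f a) (f b)) \<and>
     f oneA = oneB"

definition isl_filter :: "'a set \<Rightarrow> ('a \<Rightarrow> 'a \<Rightarrow> 'a) \<Rightarrow> 'a set \<Rightarrow> bool" where
  "isl_filter A meet F \<longleftrightarrow>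
     F \<subseteq> A \<and> F \<noteq> {} \<and>
     (\<forall>a\<in>F. \<forall>b\<in>A. isl_le meet a b \<longrightarrow> b \<in> F) \<and>
     (\<forall>a\<in>F. \<forall>b\<in>F. meet a b \<in> F)"

definition meet_irreducible_filter :: "'a set \<Rightarrow> ('a \<Rightarrow> 'a \<Rightarrow> 'a) \<Rightarrow> 'a set \<Rightarrow> bool" where
  "meet_irreducible_filter A meet F \<longleftrightarrow>
     isl_filter A meet F \<and> F \<noteq> A \<and>
     \<not> (\<exists>G H. isl_filter A meet G \<and> isl_filter A meet H \<and> G \<noteq> F \<and> H \<noteq> F \<and> F = G \<inter> H)"

definition mi_filters :: "'a set \<Rightarrow> ('a \<Rightarrow> 'a \<Rightarrow> 'a) \<Rightarrow> 'a set set" where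
  "mi_filters A meet = {F. meet_irreducible_filter A meet F}"

definition is_poset :: "'x set \<Rightarrow> ('x \<Rightarrow> 'x \<Rightarrow> bool) \<Rightarrow> bool" where
  "is_poset X le \<longleftrightarrow>
     (\<forall>x\<in>X. le x x) \<and>
     (\<forall>x\<in>X. \<forall>y\<in>X. le x y \<and> le y x \<longrightarrow> x = y) \<and>
     (\<forall>x\<in>X. \<forall>y\<in>X. \<forall>z\<in>X. le x y \<and> le y z \<longrightarrow> le x z)"

definition partial_fun :: "'x set \<Rightarrow> 'y set \<Rightarrow> ('x \<Rightarrow> 'y option) \<Rightarrow> bool" where
  "partial_fun X Y p \<longleftrightarrow> dom p \<subseteq> X \<and> ran p \<subseteq> Y"

definition partial_order_preserving ::
  "'x set \<Rightarrow> ('x \<Rightarrow> 'x \<Rightarrow> bool) \<Rightarrow> 'y set \<Rightarrow> ('y \<Rightarrow> 'y \<Rightarrow> bool) \<Rightarrow> ('x \<Rightarrow> 'y option) \<Rightarrow> bool" where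
  "partial_order_preserving X leX Y leY p \<longleftrightarrow>
     partial_fun X Y p \<and>
     (\<forall>x\<in>dom p. \<forall>z\<in>dom p. leX x z \<longrightarrow> leY (the (p x)) (the (p z)))"

definition partial_positive_pmorphism ::
  "'x set \<Rightarrow> ('x \<Rightarrow> 'x \<Rightarrow> bool) \<Rightarrow> 'y set \<Rightarrow> ('y \<Rightarrow> 'y \<Rightarrow> bool) \<Rightarrow> ('x \<Rightarrow> 'y option) \<Rightarrow> bool" where
  "partial_positive_pmorphism X leX Y leY p \<longleftrightarrow>
     partial_order_preserving X leX Y leY p \<and>
     (\<forall>x\<in>dom p. \<forall>y\<in>Y. leY (the (p x)) y \<longrightarrow>
        (\<exists>z\<in>dom p. leX x z \<and> y = the (p z)))"

definition isl_preimage :: "'a set \<Rightarrow> ('a \<Rightarrow> 'b) \<Rightarrow> 'b set \<Rightarrow> 'a set" where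
  "isl_preimage A f F = {a\<in>A. f a \<in> F}"

definition dual_map ::
  "'a set \<Rightarrow> ('a \<Rightarrow> 'a \<Rightarrow> 'a) \<Rightarrow> 'b set \<Rightarrow> ('b \<Rightarrow> 'b \<Rightarrow> 'b) \<Rightarrow> ('a \<Rightarrow> 'b) \<Rightarrow> 'b set \<Rightarrow> 'a set option" where
  "dual_map A meetA B meetB f F =
     (if F \<in> mi_filters B meetB \<and> isl_preimage A f F \<in> mi_filters A meetA
      then Some (isl_preimage A f F) else None)"

definition upsets :: "'x set \<Rightarrow> ('x \<Rightarrow> 'x \<Rightarrow> bool) \<Rightarrow> 'x set set" where
  "upsets X le = {U. U \<subseteq> X \<and> (\<forall>u\<in>U. \<forall>x\<in>X. le u x \<longrightarrow> x \<in> U)}"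

definition down_set :: "'x set \<Rightarrow> ('x \<Rightarrow> 'x \<Rightarrow> bool) \<Rightarrow> 'x set \<Rightarrow> 'x set" where
  "down_set X le S = {x\<in>X. \<exists>s\<in>S. le x s}"

definition up_imp :: "'x set \<Rightarrow> ('x \<Rightarrow> 'x \<Rightarrow> bool) \<Rightarrow> 'x set \<Rightarrow> 'x set \<Rightarrow> 'x set" where
  "up_imp X le U V = X - down_set X le (U - V)"

definition partial_preimage :: "('x \<Rightarrow> 'y option) \<Rightarrow> 'y set \<Rightarrow> 'x set" where
  "partial_preimage p S = {x\<in>dom p. the (p x) \<in> S}"

definition up_map ::
  "'x set \<Rightarrow> ('x \<Rightarrow> 'x \<Rightarrow> bool) \<Rightarrow> 'y set \<Rightarrow> ('x \<Rightarrow> 'y option) \<Rightarrow> 'y set \<Rightarrow> 'x set" where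
  "up_map X leX Y p U = X - down_set X leX (partial_preimage p (Y - U))"

end

theory Submission
  imports Defs
begin

text \<open>
  (i) Let F be in the domain of f_* and G a meet irreducible filter of A containing f^{-1}[F].
  The filter generated by F and f[G] misses f[A - G], so by Zorn's lemma it extends to a filter
  that is maximal among those missing f[A - G]. The complement of a meet irreducible filter of an
  implicative semilattice is up-directed, hence so is f[A - G], and this makes the maximal filter
  meet irreducible; its preimage under f is exactly G.

  (ii) Up_ISL(p) obviously preserves intersections and the top element. It preserves implication
  because, by positivity of p, the points below some member of Up_ISL(p)(U) - Up_ISL(p)(V) are
  exactly the points below some x in dom p with p(x) below a point of U - V.
\<close>

locale meet_semilattice_on =
  fixes A :: "'a set" and m :: "'a \<Rightarrow> 'a \<Rightarrow> 'a"
  assumes meet_closed: "a \<in> A \<Longrightarrow> b \<in> A \<Longrightarrow> m a b \<in> A"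
    and meet_assoc: "a \<in> A \<Longrightarrow> b \<in> A \<Longrightarrow> c \<in> A \<Longrightarrow> m (m a b) c = m a (m b c)"
    and meet_commute: "a \<in> A \<Longrightarrow> b \<in> A \<Longrightarrow> m a b = m b a"
    and meet_idem: "a \<in> A \<Longrightarrow> m a a = a"
begin

lemma isl_le_refl: "a \<in> A \<Longrightarrow> isl_le m a a"
  by (simp add: isl_le_def meet_idem)

lemma isl_le_trans:
  "a \<in> A \<Longrightarrow> b \<in> A \<Longrightarrow> c \<in> A \<Longrightarrow> isl_le m a b \<Longrightarrow> isl_le m b c \<Longrightarrow> isl_le m a c"
  unfolding isl_le_def by (metis meet_assoc)

lemma meet_le1: "a \<in> A \<Longrightarrow> b \<in> A \<Longrightarrow> isl_le m (m a b) a"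
  unfolding isl_le_def by (metis meet_assoc meet_commute meet_idem)

lemma meet_le2: "a \<in> A \<Longrightarrow> b \<in> A \<Longrightarrow> isl_le m (m a b) b"
  unfolding isl_le_def by (metis meet_assoc meet_idem)

lemma le_meetI:
  "a \<in> A \<Longrightarrow> b \<in> A \<Longrightarrow> c \<in> A \<Longrightarrow> isl_le m c a \<Longrightarrow> isl_le m c b \<Longrightarrow> isl_le m c (m a b)"
  unfolding isl_le_def by (metis meet_assoc)

lemma meet_mono:
  "a \<in> A \<Longrightarrow> b \<in> A \<Longrightarrow> a' \<in> A \<Longrightarrow> b' \<in> A \<Longrightarrow> isl_le m a a' \<Longrightarrow> isl_le m b b'
   \<Longrightarrow> isl_le m (m a b) (m a' b')"
  by (meson meet_closed le_meetI meet_le1 meet_le2 isl_le_trans)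

lemma filter_subset: "isl_filter A m F \<Longrightarrow> F \<subseteq> A"
  unfolding isl_filter_def by auto

lemma filter_upward: "isl_filter A m F \<Longrightarrow> x \<in> F \<Longrightarrow> y \<in> A \<Longrightarrow> isl_le m x y \<Longrightarrow> y \<in> F"
  unfolding isl_filter_def by auto

lemma filter_meet: "isl_filter A m F \<Longrightarrow> x \<in> F \<Longrightarrow> y \<in> F \<Longrightarrow> m x y \<in> F"
  unfolding isl_filter_def by auto

definition filter_join :: "'a set \<Rightarrow> 'a set \<Rightarrow> 'a set" where
  "filter_join F S = {y\<in>A. \<exists>c\<in>F. \<exists>s\<in>S. isl_le m (m c s) y}"

lemma
  assumes F: "isl_filter A m F" and S: "S \<subseteq> A" "S \<noteq> {}" "\<And>s t. s \<in> S \<Longrightarrow> t \<in> S \<Longrightarrow> m s t \<in> S"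
  shows isl_filter_filter_join: "isl_filter A m (filter_join F S)"
    and filter_join_upper1: "F \<subseteq> filter_join F S"
    and filter_join_upper2: "S \<subseteq> filter_join F S"
proof -
  have FA: "F \<subseteq> A" using F filter_subset by blast
  obtain s0 where s0: "s0 \<in> S" using S by auto
  obtain c0 where c0: "c0 \<in> F" using F unfolding isl_filter_def by auto
  show FH: "F \<subseteq> filter_join F S"
  proof
    fix c assume "c \<in> F"
    then show "c \<in> filter_join F S"
      unfolding filter_join_def using FA S s0 meet_le1[of c s0] by blast
  qed
  show "S \<subseteq> filter_join F S"
  proof
    fix s assume "s \<in> S"
    then show "s \<in> filter_join F S"
      unfolding filter_join_def using FA S c0 meet_le2[of c0 s] by blast
  qed
  show "isl_filter A m (filter_join F S)"
    unfolding isl_filter_def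
  proof (intro conjI ballI impI)
    show "filter_join F S \<subseteq> A" unfolding filter_join_def by auto
    show "filter_join F S \<noteq> {}" using FH c0 by auto
  next
    fix a b assume "a \<in> filter_join F S" "b \<in> A" "isl_le m a b"
    then obtain c s where "a \<in> A" "c \<in> F" "s \<in> S" "isl_le m (m c s) a"
      unfolding filter_join_def by auto
    moreover from this have "isl_le m (m c s) b"
      using \<open>b \<in> A\<close> \<open>isl_le m a b\<close> FA S isl_le_trans[OF meet_closed, of c s a b] by blast
    ultimately show "b \<in> filter_join F S"
      unfolding filter_join_def using \<open>b \<in> A\<close> by blast
  next
    fix a b assume "a \<in> filter_join F S" "b \<in> filter_join F S"
    then obtain c s c' s' where cs: "a \<in> A" "c \<in> F" "s \<in> S" "isl_le m (m c s) a"
        and cs': "b \<in> A" "c' \<in> F" "s' \<in> S" "isl_le m (m c' s') b"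
      unfolding filter_join_def by auto
    have in_A: "c \<in> A" "s \<in> A" "c' \<in> A" "s' \<in> A" using cs cs' FA S by auto
    let ?w = "m (m c c') (m s s')"
    have "isl_le m ?w (m c s)"
      using in_A meet_mono[OF meet_closed meet_closed, of c c' s s' c s] meet_le1 by simp
    moreover have "isl_le m ?w (m c' s')"
      using in_A meet_mono[OF meet_closed meet_closed, of c c' s s' c' s'] meet_le2 by simp
    ultimately
    have "isl_le m ?w (m a b)"
      using in_A cs cs' le_meetI[of a b ?w] isl_le_trans[of ?w "m c s" a] isl_le_trans[of ?w "m c' s'" b]
        meet_closed by simp
    moreover have "m c c' \<in> F" using F cs cs' filter_meet by auto
    moreover have "m s s' \<in> S" using S cs cs' by auto
    ultimately show "m a b \<in> filter_join F S"
      unfolding filter_join_def using meet_closed[of a b] cs cs' by blast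
  qed
qed

lemma isl_filter_Union_chain:
  assumes "C \<noteq> {}" "subset.chain {F. isl_filter A m F} C"
  shows "isl_filter A m (\<Union>C)"
proof -
  have filters: "\<And>F. F \<in> C \<Longrightarrow> isl_filter A m F"
    and chain: "\<And>F G. F \<in> C \<Longrightarrow> G \<in> C \<Longrightarrow> F \<subseteq> G \<or> G \<subseteq> F"
    using assms(2) unfolding subset_chain_def by auto
  show ?thesis
    unfolding isl_filter_def
  proof (intro conjI ballI impI)
    show "\<Union>C \<subseteq> A" using filters filter_subset by blast
    show "\<Union>C \<noteq> {}" using assms(1) filters unfolding isl_filter_def by blast
  next
    fix x y assume "x \<in> \<Union>C" "y \<in> A" "isl_le m x y"
    then show "y \<in> \<Union>C" using filters filter_upward by blast
  next
    fix x y assume "x \<in> \<Union>C" "y \<in> \<Union>C"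
    then obtain F G where "F \<in> C" "G \<in> C" "x \<in> F" "y \<in> G" by auto
    then show "m x y \<in> \<Union>C"
      using chain[of F G] filters filter_meet by blast
  qed
qed

lemma exists_meet_irreducible_filter_disjoint:
  assumes H: "isl_filter A m H" "H \<inter> D = {}"
    and D: "D \<subseteq> A" "D \<noteq> {}" "\<And>a b. a \<in> D \<Longrightarrow> b \<in> D \<Longrightarrow> \<exists>c\<in>D. isl_le m a c \<and> isl_le m b c"
  shows "\<exists>M. meet_irreducible_filter A m M \<and> H \<subseteq> M \<and> M \<inter> D = {}"
proof -
  define \<F> where "\<F> = {F. isl_filter A m F \<and> H \<subseteq> F \<and> F \<inter> D = {}}"
  have "\<exists>M\<in>\<F>. \<forall>F\<in>\<F>. M \<subseteq> F \<longrightarrow> F = M"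
  proof (rule subset_Zorn_nonempty)
    show "\<F> \<noteq> {}" using H unfolding \<F>_def by auto
  next
    fix C assume "C \<noteq> {}" "subset.chain \<F> C"
    moreover have "subset.chain {F. isl_filter A m F} C"
      using \<open>subset.chain \<F> C\<close> unfolding subset_chain_def \<F>_def by auto
    ultimately show "\<Union>C \<in> \<F>"
      using isl_filter_Union_chain unfolding \<F>_def subset_chain_def by auto
  qed
  then obtain M where M: "isl_filter A m M" "H \<subseteq> M" "M \<inter> D = {}"
    and maximal: "\<And>F. isl_filter A m F \<Longrightarrow> M \<subseteq> F \<Longrightarrow> F \<inter> D = {} \<Longrightarrow> F = M"
    unfolding \<F>_def by auto
  have "M \<noteq> A" using M D by auto
  moreover have "\<not> (\<exists>F G. isl_filter A m F \<and> isl_filter A m G \<and> F \<noteq> M \<and> G \<noteq> M \<and> M = F \<inter> G)"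
  proof
    assume "\<exists>F G. isl_filter A m F \<and> isl_filter A m G \<and> F \<noteq> M \<and> G \<noteq> M \<and> M = F \<inter> G"
    then obtain F G where FG: "isl_filter A m F" "isl_filter A m G" "F \<noteq> M" "G \<noteq> M" "M = F \<inter> G"
      by blast
    obtain a b where "a \<in> F \<inter> D" "b \<in> G \<inter> D" using maximal FG by blast
    then obtain c where "c \<in> D" "isl_le m a c" "isl_le m b c" using D(3) by blast
    then have "c \<in> F \<inter> G" using FG D(1) \<open>a \<in> F \<inter> D\<close> \<open>b \<in> G \<inter> D\<close> filter_upward by blast
    then show False using FG M \<open>c \<in> D\<close> by auto
  qed
  ultimately show ?thesis unfolding meet_irreducible_filter_def using M by blast
qed

end

locale isl_on =
  fixes A :: "'a set" and m :: "'a \<Rightarrow> 'a \<Rightarrow> 'a" and i :: "'a \<Rightarrow> 'a \<Rightarrow> 'a" and one :: 'a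
  assumes is_isl: "is_isl A m i one"

sublocale isl_on \<subseteq> meet_semilattice_on A m
  using is_isl unfolding is_isl_def by unfold_locales auto

context isl_on
begin

lemma imp_closed: "a \<in> A \<Longrightarrow> b \<in> A \<Longrightarrow> i a b \<in> A"
  using is_isl unfolding is_isl_def by auto

lemma le_imp_iff:
  "a \<in> A \<Longrightarrow> b \<in> A \<Longrightarrow> c \<in> A \<Longrightarrow> isl_le m c (i a b) \<longleftrightarrow> isl_le m (m c a) b"
  using is_isl unfolding is_isl_def by blast

lemma meet_imp_le: "a \<in> A \<Longrightarrow> b \<in> A \<Longrightarrow> isl_le m (m a (i a b)) b"
  by (metis imp_closed meet_commute isl_le_refl le_imp_iff)

lemma filter_imp_mp: "isl_filter A m F \<Longrightarrow> a \<in> F \<Longrightarrow> i a b \<in> F \<Longrightarrow> b \<in> A \<Longrightarrow> b \<in> F"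
  using filter_upward[of F "m a (i a b)" b] filter_meet[of F a "i a b"] meet_imp_le[of a b]
    filter_subset by blast

text \<open>The filters generated by G with a and with b share an element x outside G, and for
  suitable g in G the element g \<rightarrow> x lies above a and b but still outside G.\<close>

lemma meet_irreducible_filter_complement_directed:
  assumes G: "meet_irreducible_filter A m G"
    and a: "a \<in> A" "a \<notin> G" and b: "b \<in> A" "b \<notin> G"
  shows "\<exists>c\<in>A - G. isl_le m a c \<and> isl_le m b c"
proof -
  have GF: "isl_filter A m G" using G unfolding meet_irreducible_filter_def by auto
  have GA: "G \<subseteq> A" using GF filter_subset by blast
  have joins: "isl_filter A m (filter_join G {x})" "G \<subseteq> filter_join G {x}" "x \<in> filter_join G {x}"
    if "x \<in> A" for x
    using that isl_filter_filter_join[OF GF, of "{x}"] filter_join_upper1[OF GF, of "{x}"]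
      filter_join_upper2[OF GF, of "{x}"] by (auto simp: meet_idem)
  have "filter_join G {a} \<noteq> G" "filter_join G {b} \<noteq> G" using joins a b by auto
  then have "G \<noteq> filter_join G {a} \<inter> filter_join G {b}"
    using G joins[OF a(1)] joins[OF b(1)] unfolding meet_irreducible_filter_def by blast
  moreover have "G \<subseteq> filter_join G {a} \<inter> filter_join G {b}"
    using joins(2)[OF a(1)] joins(2)[OF b(1)] by blast
  ultimately obtain x where "x \<in> filter_join G {a}" "x \<in> filter_join G {b}" "x \<notin> G"
    by blast
  then obtain g1 g2 where g: "g1 \<in> G" "g2 \<in> G" "isl_le m (m g1 a) x" "isl_le m (m g2 b) x"
    and "x \<in> A" "x \<notin> G"
    unfolding filter_join_def by auto
  define g where "g = m g1 g2"
  have "g \<in> G" using g GF filter_meet g_def by auto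
  have in_A: "g1 \<in> A" "g2 \<in> A" "g \<in> A" using g \<open>g \<in> G\<close> GA by auto
  have "isl_le m (m g a) (m g1 a)"
    using meet_mono[of g a g1 a] meet_le1[of g1 g2] isl_le_refl[of a] in_A a g_def by simp
  then have "isl_le m (m g a) x"
    using isl_le_trans[of "m g a" "m g1 a" x] meet_closed in_A a g \<open>x \<in> A\<close> by simp
  then have "isl_le m a (i g x)"
    using le_imp_iff[of g x a] meet_commute[of a g] in_A a \<open>x \<in> A\<close> by simp
  moreover have "isl_le m (m g b) (m g2 b)"
    using meet_mono[of g b g2 b] meet_le2[of g1 g2] isl_le_refl[of b] in_A b g_def by simp
  then have "isl_le m (m g b) x"
    using isl_le_trans[of "m g b" "m g2 b" x] meet_closed in_A b g \<open>x \<in> A\<close> by simp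
  then have "isl_le m b (i g x)"
    using le_imp_iff[of g x b] meet_commute[of b g] in_A b \<open>x \<in> A\<close> by simp
  moreover have "i g x \<notin> G"
    using filter_imp_mp[OF GF \<open>g \<in> G\<close>] \<open>x \<in> A\<close> \<open>x \<notin> G\<close> by blast
  ultimately show ?thesis using imp_closed in_A \<open>x \<in> A\<close> by blast
qed

end

lemma isl_hom_mono:
  assumes "isl_hom A mA iA oA B mB iB oB f" "a \<in> A" "b \<in> A" "isl_le mA a b"
  shows "isl_le mB (f a) (f b)"
proof -
  have "f a = f (mA a b)" using assms(4) by (simp add: isl_le_def)
  also have "\<dots> = mB (f a) (f b)" using assms(1-3) by (simp add: isl_hom_def)
  finally show ?thesis by (simp add: isl_le_def)
qed

lemma isl_hom_image_filter:
  assumes f: "isl_hom A mA iA oA B mB iB oB f" and G: "isl_filter A mA G"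
  shows "f ` G \<subseteq> B" "f ` G \<noteq> {}" "\<And>s t. s \<in> f ` G \<Longrightarrow> t \<in> f ` G \<Longrightarrow> mB s t \<in> f ` G"
proof -
  have GA: "G \<subseteq> A" using G unfolding isl_filter_def by blast
  then show "f ` G \<subseteq> B" "f ` G \<noteq> {}"
    using f G unfolding isl_hom_def isl_filter_def by auto
  fix s t assume "s \<in> f ` G" "t \<in> f ` G"
  then obtain g g' where "g \<in> G" "g' \<in> G" "s = f g" "t = f g'" by blast
  moreover from this have "g \<in> A" "g' \<in> A" using GA by auto
  ultimately have "mB s t = f (mA g g')" using f unfolding isl_hom_def by simp
  moreover have "mA g g' \<in> G" using G \<open>g \<in> G\<close> \<open>g' \<in> G\<close> unfolding isl_filter_def by blast
  ultimately show "mB s t \<in> f ` G" by blast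
qed

lemma filter_join_image_disjoint:
  assumes A: "isl_on A mA iA oA" and B: "isl_on B mB iB oB"
    and f: "isl_hom A mA iA oA B mB iB oB f"
    and F: "isl_filter B mB F" and G: "isl_filter A mA G"
    and FG: "isl_preimage A f F \<subseteq> G"
  shows "meet_semilattice_on.filter_join B mB F (f ` G) \<inter> f ` (A - G) = {}"
proof (rule ccontr)
  \<comment> \<open>c \<and> f g \<le> f x gives c \<le> f (g \<rightarrow> x), so g \<rightarrow> x \<in> G and then x \<in> G\<close>
  interpret a: isl_on A mA iA oA by (fact A)
  interpret b: isl_on B mB iB oB by (fact B)
  have f_in: "\<And>x. x \<in> A \<Longrightarrow> f x \<in> B"
    and f_imp: "\<And>x y. x \<in> A \<Longrightarrow> y \<in> A \<Longrightarrow> f (iA x y) = iB (f x) (f y)"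
    using f unfolding isl_hom_def by auto
  assume "b.filter_join F (f ` G) \<inter> f ` (A - G) \<noteq> {}"
  then obtain c g x where x: "x \<in> A" "x \<notin> G" "c \<in> F" "g \<in> G" "isl_le mB (mB c (f g)) (f x)"
    unfolding b.filter_join_def by auto
  have "g \<in> A" "c \<in> B" using x G F a.filter_subset b.filter_subset by auto
  then have "isl_le mB c (f (iA g x))"
    using b.le_imp_iff[of "f g" "f x" c] f_in f_imp x by simp
  then have "f (iA g x) \<in> F"
    by (rule b.filter_upward[OF F \<open>c \<in> F\<close> f_in[OF a.imp_closed[OF \<open>g \<in> A\<close> \<open>x \<in> A\<close>]]])
  then have "iA g x \<in> G"
    using FG a.imp_closed \<open>g \<in> A\<close> x unfolding isl_preimage_def by auto
  then show False using a.filter_imp_mp[OF G \<open>g \<in> G\<close>] x by blast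
qed

lemma exists_meet_irreducible_filter_preimage_eq:
  assumes A: "isl_on A mA iA oA" and B: "isl_on B mB iB oB"
    and f: "isl_hom A mA iA oA B mB iB oB f"
    and F: "isl_filter B mB F" and G: "meet_irreducible_filter A mA G"
    and FG: "isl_preimage A f F \<subseteq> G"
  shows "\<exists>H. meet_irreducible_filter B mB H \<and> F \<subseteq> H \<and> isl_preimage A f H = G"
proof -
  interpret a: isl_on A mA iA oA by (fact A)
  interpret b: isl_on B mB iB oB by (fact B)
  have GF: "isl_filter A mA G" and "G \<noteq> A"
    using G unfolding meet_irreducible_filter_def by auto
  have GA: "G \<subseteq> A" using GF a.filter_subset by blast
  define D where "D = f ` (A - G)"
  define H0 where "H0 = b.filter_join F (f ` G)"
  note fG = isl_hom_image_filter[OF f GF]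
  have H0: "isl_filter B mB H0" "F \<subseteq> H0" "f ` G \<subseteq> H0"
    unfolding H0_def using b.isl_filter_filter_join[OF F fG] b.filter_join_upper1[OF F fG]
      b.filter_join_upper2[OF F fG] by simp_all
  have "H0 \<inter> D = {}"
    unfolding H0_def D_def by (rule filter_join_image_disjoint[OF A B f F GF FG])
  moreover have "D \<subseteq> B" "D \<noteq> {}"
    using f GA \<open>G \<noteq> A\<close> unfolding D_def isl_hom_def by auto
  moreover have "\<exists>e\<in>D. isl_le mB d e \<and> isl_le mB d' e" if d: "d \<in> D" "d' \<in> D" for d d'
  proof -
    obtain x x' where "x \<in> A - G" "x' \<in> A - G" "d = f x" "d' = f x'"
      using d unfolding D_def by auto
    then obtain y where "y \<in> A - G" "isl_le mA x y" "isl_le mA x' y"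
      using a.meet_irreducible_filter_complement_directed[OF G] by blast
    then show ?thesis
      using isl_hom_mono[OF f] \<open>x \<in> A - G\<close> \<open>x' \<in> A - G\<close> \<open>d = f x\<close> \<open>d' = f x'\<close>
      unfolding D_def by blast
  qed
  ultimately obtain M where M: "meet_irreducible_filter B mB M" "H0 \<subseteq> M" "M \<inter> D = {}"
    using b.exists_meet_irreducible_filter_disjoint[OF H0(1), of D] by blast
  have "isl_preimage A f M = G"
    using M(2,3) H0(3) GA unfolding isl_preimage_def D_def by blast
  then show ?thesis using M H0 by blast
qed

lemma dual_map_partial_positive_pmorphism:
  assumes "is_isl A mA iA oA" "is_isl B mB iB oB" "isl_hom A mA iA oA B mB iB oB f"
  shows "partial_positive_pmorphism (mi_filters B mB) (\<subseteq>) (mi_filters A mA) (\<subseteq>)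
        (dual_map A mA B mB f)"
proof -
  let ?f = "dual_map A mA B mB f"
  have dom: "dom ?f = {F \<in> mi_filters B mB. isl_preimage A f F \<in> mi_filters A mA}"
    unfolding dual_map_def dom_def by auto
  have the_f: "\<And>F. F \<in> dom ?f \<Longrightarrow> the (?f F) = isl_preimage A f F"
    unfolding dom dual_map_def by auto
  have "partial_fun (mi_filters B mB) (mi_filters A mA) ?f"
    unfolding partial_fun_def ran_def dom dual_map_def by (auto split: if_splits)
  then have "partial_order_preserving (mi_filters B mB) (\<subseteq>) (mi_filters A mA) (\<subseteq>) ?f"
    unfolding partial_order_preserving_def using the_f unfolding isl_preimage_def by auto
  moreover have "\<exists>H\<in>dom ?f. F \<subseteq> H \<and> G = the (?f H)"
    if F: "F \<in> dom ?f" and G: "G \<in> mi_filters A mA" and FG: "the (?f F) \<subseteq> G" for F G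
  proof -
    have "isl_filter B mB F"
      using F dom unfolding mi_filters_def meet_irreducible_filter_def by auto
    then obtain H where "meet_irreducible_filter B mB H" "F \<subseteq> H" "isl_preimage A f H = G"
      using exists_meet_irreducible_filter_preimage_eq[of A mA iA oA B mB iB oB f F G]
        assms F G FG the_f unfolding isl_on_def mi_filters_def by auto
    then show ?thesis using G dom the_f unfolding mi_filters_def by auto
  qed
  ultimately show ?thesis unfolding partial_positive_pmorphism_def by blast
qed

lemma mem_up_map:
  "x \<in> up_map X leX Y p U \<longleftrightarrow> x \<in> X \<and> (\<forall>w\<in>dom p. leX x w \<longrightarrow> the (p w) \<in> Y \<longrightarrow> the (p w) \<in> U)"
  unfolding up_map_def down_set_def partial_preimage_def by auto

lemma diff_down_set_in_upsets:
  assumes "is_poset X le" "S \<subseteq> X"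
  shows "X - down_set X le S \<in> upsets X le"
proof -
  have "x \<notin> down_set X le S"
    if "u \<in> X - down_set X le S" "x \<in> X" "le u x" for u x
  proof
    assume "x \<in> down_set X le S"
    then obtain s where "s \<in> S" "le x s" unfolding down_set_def by blast
    then have "le u s"
      using assms that unfolding is_poset_def by blast
    then show False using that \<open>s \<in> S\<close> unfolding down_set_def by blast
  qed
  then show ?thesis unfolding upsets_def by blast
qed

lemma up_map_in_upsets:
  assumes "is_poset X leX" "dom p \<subseteq> X"
  shows "up_map X leX Y p U \<in> upsets X leX"
proof -
  have "partial_preimage p (Y - U) \<subseteq> X"
    using assms(2) unfolding partial_preimage_def by auto
  then show ?thesis
    unfolding up_map_def by (rule diff_down_set_in_upsets[OF assms(1)])
qed

lemma up_map_Int: "up_map X leX Y p (U \<inter> V) = up_map X leX Y p U \<inter> up_map X leX Y p V"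
  by (auto simp: mem_up_map)

lemma up_map_top: "up_map X leX Y p Y = X"
  by (auto simp: mem_up_map)

lemma down_set_up_map_diff:
  assumes X: "is_poset X leX" and Y: "is_poset Y leY"
    and p: "partial_positive_pmorphism X leX Y leY p"
    and U: "U \<in> upsets Y leY"
  shows "down_set X leX (up_map X leX Y p U - up_map X leX Y p V)
       = down_set X leX (partial_preimage p (down_set Y leY (U - V)))"
proof -
  have dom_p: "dom p \<subseteq> X" and p_in: "\<And>x. x \<in> dom p \<Longrightarrow> the (p x) \<in> Y"
    using p unfolding partial_positive_pmorphism_def partial_order_preserving_def partial_fun_def
    by (auto intro: ranI)
  have p_mono: "\<And>x z. x \<in> dom p \<Longrightarrow> z \<in> dom p \<Longrightarrow> leX x z \<Longrightarrow> leY (the (p x)) (the (p z))"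
    and p_pos: "\<And>x y. x \<in> dom p \<Longrightarrow> y \<in> Y \<Longrightarrow> leY (the (p x)) y
                  \<Longrightarrow> \<exists>z\<in>dom p. leX x z \<and> y = the (p z)"
    using p unfolding partial_positive_pmorphism_def partial_order_preserving_def by auto
  have X_refl: "\<And>x. x \<in> X \<Longrightarrow> leX x x"
    and X_trans: "\<And>x y z. x \<in> X \<Longrightarrow> y \<in> X \<Longrightarrow> z \<in> X \<Longrightarrow> leX x y \<Longrightarrow> leX y z \<Longrightarrow> leX x z"
    using X unfolding is_poset_def by blast+
  have Y_refl: "\<And>y. y \<in> Y \<Longrightarrow> leY y y"
    using Y unfolding is_poset_def by blast
  have U_up: "\<And>u y. u \<in> U \<Longrightarrow> y \<in> Y \<Longrightarrow> leY u y \<Longrightarrow> y \<in> U" and "U \<subseteq> Y"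
    using U unfolding upsets_def by auto
  let ?mU = "up_map X leX Y p U" and ?mV = "up_map X leX Y p V"
  show ?thesis
  proof (rule set_eqI, rule iffI)
    fix x assume "x \<in> down_set X leX (?mU - ?mV)"
    then obtain z where "x \<in> X" "leX x z" "z \<in> ?mU" "z \<notin> ?mV"
      unfolding down_set_def by auto
    then obtain w where w: "w \<in> dom p" "leX z w" "the (p w) \<in> Y" "the (p w) \<notin> V"
      unfolding mem_up_map by auto
    have "the (p w) \<in> U" using \<open>z \<in> ?mU\<close> w unfolding mem_up_map by auto
    then have "w \<in> partial_preimage p (down_set Y leY (U - V))"
      unfolding partial_preimage_def down_set_def using w Y_refl by auto
    moreover have "leX x w"
      using X_trans[of x z w] \<open>x \<in> X\<close> \<open>leX x z\<close> \<open>z \<in> ?mU\<close> w dom_p unfolding mem_up_map by auto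
    ultimately show "x \<in> down_set X leX (partial_preimage p (down_set Y leY (U - V)))"
      unfolding down_set_def using \<open>x \<in> X\<close> by blast
  next
    fix x assume "x \<in> down_set X leX (partial_preimage p (down_set Y leY (U - V)))"
    then obtain x' y where x: "x \<in> X" "x' \<in> dom p" "leX x x'" "y \<in> U" "y \<notin> V"
        "leY (the (p x')) y"
      unfolding down_set_def partial_preimage_def by auto
    then obtain z where z: "z \<in> dom p" "leX x' z" "y = the (p z)"
      using p_pos \<open>U \<subseteq> Y\<close> by blast
    have "z \<in> ?mU"
      unfolding mem_up_map using z dom_p p_mono U_up x(4) by blast
    moreover have "z \<notin> ?mV"
      unfolding mem_up_map using z dom_p X_refl p_in x(5) by blast
    moreover have "leX x z" using X_trans[of x x' z] x z dom_p by blast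
    ultimately show "x \<in> down_set X leX (?mU - ?mV)"
      unfolding down_set_def using x by blast
  qed
qed

lemma up_map_up_imp:
  assumes "is_poset X leX" "is_poset Y leY" "partial_positive_pmorphism X leX Y leY p"
    and "U \<in> upsets Y leY"
  shows "up_map X leX Y p (up_imp Y leY U V)
       = up_imp X leX (up_map X leX Y p U) (up_map X leX Y p V)"
proof -
  have "Y - up_imp Y leY U V = down_set Y leY (U - V)"
    unfolding up_imp_def down_set_def by blast
  then show ?thesis
    unfolding up_imp_def[of X] up_map_def[of X leX Y p "up_imp Y leY U V"]
    by (simp add: down_set_up_map_diff[OF assms])
qed

lemma up_map_isl_hom:
  assumes "is_poset X leX" "is_poset Y leY" "partial_positive_pmorphism X leX Y leY p"
  shows "isl_hom (upsets Y leY) (\<inter>) (up_imp Y leY) Y (upsets X leX) (\<inter>) (up_imp X leX) X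
           (up_map X leX Y p)"
proof -
  have "dom p \<subseteq> X"
    using assms(3)
    unfolding partial_positive_pmorphism_def partial_order_preserving_def partial_fun_def by blast
  then show ?thesis
    unfolding isl_hom_def
    by (intro conjI ballI up_map_in_upsets[OF assms(1)] up_map_Int up_map_top up_map_up_imp[OF assms])
qed

theorem proposition3p11:
  shows
  "(\<forall>(A :: 'a set) meetA impA oneA (B :: 'b set) meetB impB oneB f.
      is_isl A meetA impA oneA \<longrightarrow> is_isl B meetB impB oneB \<longrightarrow>
      isl_hom A meetA impA oneA B meetB impB oneB f \<longrightarrow>
      partial_positive_pmorphism (mi_filters B meetB) (\<subseteq>) (mi_filters A meetA) (\<subseteq>)
        (dual_map A meetA B meetB f))
   \<and>
   (\<forall>(X :: 'x set) leX (Y :: 'y set) leY p.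
      is_poset X leX \<longrightarrow> is_poset Y leY \<longrightarrow>
      partial_positive_pmorphism X leX Y leY p \<longrightarrow>
      isl_hom (upsets Y leY) (\<inter>) (up_imp Y leY) Y
              (upsets X leX) (\<inter>) (up_imp X leX) X
              (up_map X leX Y p))"
  by (intro conjI allI impI dual_map_partial_positive_pmorphism up_map_isl_hom)

end
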